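(* Let $0=t_0<\dots<t_N=T$, $\tau_k=t_k-t_{k-1}$, $r_k=\tau_k/\tau_{k-1}$ ($2\le k\le N$). Let $r_{\max}\approx4.8645$ be the positive root of $x^3=(2x+1)^2$, fix $\delta\in(0,r_{\max})$ and assume $r_2>0$ and $0<r_k\le r_{\max}-\delta$ for $3\le k\le N$. Then the DOC kernels $\theta^{(n)}_{n-k}$ ($n\ge2$) are positive definite; more precisely, for any real sequence $\{\omega_j\}_{j=1}^n$ and $2\le n\le N$, $$2\sum_{k=2}^n\omega_k\sum_{j=2}^k\theta^{(k)}_{k-j}\omega_j\ge C_r\delta\sum_{k=2}^n\tau_k^{-1}\Big(\sum_{j=2}^k\theta^{(k)}_{k-j}\omega_j\Big)^2,$$ where $C_r=\sqrt{r_{\max}}/(1+r_{\max})^2$.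
   Context: BDF2 kernels: $b^{(1)}_0=1/\tau_1$; for $n\ge2$, $b^{(n)}_0=\frac{1+2r_n}{\tau_n(1+r_n)}$, $b^{(n)}_1=-\frac{r_n^2}{\tau_n(1+r_n)}$, $b^{(n)}_j=0$ for $2\le j\le n-1$. The discrete orthogonal convolution (DOC) kernels $\theta^{(n)}_{n-j}$ ($1\le j\le n$) are defined by $\sum_{j=k}^n\theta^{(n)}_{n-j}b^{(j)}_{j-k}=\delta_{nk}$ (Kronecker delta) for all $1\le k\le n$. *)

theory Defs
  imports Complex_Main
begin

definition tau :: "(nat \<Rightarrow> real) \<Rightarrow> nat \<Rightarrow> real" where
  "tau t k = t k - t (k - 1)"

definition ratio :: "(nat \<Rightarrow> real) \<Rightarrow> nat \<Rightarrow> real" where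
  "ratio t k = tau t k / tau t (k - 1)"

text \<open>BDF2 kernel: bdf2 t n k denotes b^{(n)}_{n-k} for 1 <= k <= n.\<close>
definition bdf2 :: "(nat \<Rightarrow> real) \<Rightarrow> nat \<Rightarrow> nat \<Rightarrow> real" where
  "bdf2 t n k =
     (if n = 1 then (if k = 1 then 1 / tau t 1 else 0)
      else if k = n then (1 + 2 * ratio t n) / (tau t n * (1 + ratio t n))
      else if Suc k = n then - (ratio t n ^ 2) / (tau t n * (1 + ratio t n))
      else 0)"

text \<open>DOC kernels: theta n j denotes theta^{(n)}_{n-j}; they are characterized by
  the discrete orthogonality identity.\<close>
definition is_DOC :: "(nat \<Rightarrow> real) \<Rightarrow> nat \<Rightarrow> (nat \<Rightarrow> nat \<Rightarrow> real) \<Rightarrow> bool" where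
  "is_DOC t N theta \<longleftrightarrow>
     (\<forall>n\<in>{1..N}. \<forall>k\<in>{1..n}.
        (\<Sum>j=k..n. theta n j * bdf2 t j k) = (if n = k then 1 else 0))"

definition r_max :: real where
  "r_max = (THE x. x > 0 \<and> x ^ 3 = (2 * x + 1) ^ 2)"

definition C_r :: real where
  "C_r = sqrt r_max / (1 + r_max) ^ 2"

end

theory Submission
  imports Defs
begin

(* Put v_k = sum_{j=2..k} theta^(k)_{k-j} omega_j.  The DOC kernels are a left inverse of the
   lower triangular BDF2 matrix, hence also a right inverse, so omega_k = b^(k)_0 v_k + b^(k)_1 v_(k-1).
   With s = sqrt r_k, Young's inequality 2 s^4 v w <= s^3 v^2 + s^5 w^2 then gives the one-step
   energy inequality
     2 omega_k v_k >= G(s) v_k^2 / tau_k - L(s) v_(k-1)^2 / tau_(k-1),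
   G(s) = (2 + 4 s^2 - s^3) / (1 + s^2),  L(s) = s^3 / (1 + s^2).
   Summing over k, every v_k^2 / tau_k carries the coefficient G(s_k) - L(s_(k+1)).  Since
   G(s) - L(s) = 2 (1 + 2 s^2 - s^3) / (1 + s^2) vanishes exactly at s = sqrt r_max, the bound
   s_k <= sqrt (r_max - delta) keeps all these coefficients above C_r delta. *)

lemma cubic_root_gt_4:
  fixes x :: real
  assumes "0 < x" "x^3 = (2 * x + 1)^2"
  shows "4 < x"
proof (rule ccontr)
  assume "\<not> 4 < x"
  then have "x^2 * x \<le> x^2 * 4"
    by (intro mult_left_mono) auto
  moreover have "x^3 = x^2 * x" "(2 * x + 1)^2 = 4 * x^2 + 4 * x + 1"
    by (simp_all add: power2_eq_square power3_eq_cube algebra_simps)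
  ultimately have "x^3 < (2 * x + 1)^2"
    using assms by linarith
  with assms show False
    by simp
qed

lemma cubic_strict_mono_above_4:
  fixes x y :: real
  assumes "4 < x" "x < y"
  shows "x^3 - (2 * x + 1)^2 < y^3 - (2 * y + 1)^2"
proof -
  have "y^3 - (2 * y + 1)^2 - (x^3 - (2 * x + 1)^2)
      = (y - x) * ((y - 4) * y + (x - 4) * x + (x * y - 4))"
    by (simp add: algebra_simps power2_eq_square power3_eq_cube)
  moreover have "4 \<le> x * y"
    using assms mult_mono[of 4 x 1 y] by simp
  then have "0 < (y - x) * ((y - 4) * y + (x - 4) * x + (x * y - 4))"
    using assms by (intro mult_pos_pos add_pos_nonneg) auto
  ultimately show ?thesis
    by linarith
qed

lemma r_max_root: "4 < r_max" "r_max^3 = (2 * r_max + 1)^2"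
proof -
  let ?P = "\<lambda>x::real. 0 < x \<and> x^3 = (2 * x + 1)^2"
  have "\<exists>x::real\<ge>4. x \<le> 5 \<and> x^3 - (2 * x + 1)^2 = 0"
    by (intro IVT) (auto intro!: continuous_intros simp: power2_eq_square power3_eq_cube)
  then obtain x :: real where "4 \<le> x" "x^3 = (2 * x + 1)^2"
    by auto
  then have "?P x"
    by simp
  moreover have "y = x" if "?P y" for y
    using cubic_root_gt_4 cubic_strict_mono_above_4 that \<open>?P x\<close>
    by (metis linorder_neqE_linordered_idom less_irrefl diff_self)
  ultimately have "r_max = x"
    unfolding r_max_def by (rule the_equality)
  with \<open>?P x\<close> show "4 < r_max" "r_max^3 = (2 * r_max + 1)^2"
    using cubic_root_gt_4 by auto
qed

lemma sqrt_r_max_cubic: "sqrt r_max^3 = 2 * sqrt r_max^2 + 1"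
proof (rule power2_eq_imp_eq)
  have "(sqrt r_max^3)^2 = (sqrt r_max^2)^3"
    by (simp flip: power_mult add: mult.commute)
  then have "(sqrt r_max^3)^2 = r_max^3"
    using r_max_root by simp
  then show "(sqrt r_max^3)^2 = (2 * sqrt r_max^2 + 1)^2"
    using r_max_root by simp
qed (use r_max_root in auto)

lemma C_r_times_r_max_le: "C_r * r_max \<le> 1 / 3"
proof -
  define \<sigma> where "\<sigma> = sqrt r_max"
  have "2 < \<sigma>" "\<sigma>^2 = r_max"
    using r_max_root real_less_rsqrt[of 2 r_max] by (simp_all add: \<sigma>_def)
  have root: "\<sigma>^3 = 2 * \<sigma>^2 + 1"
    using sqrt_r_max_cubic by (simp add: \<sigma>_def)
  then have "\<sigma>^4 = 2 * \<sigma>^3 + \<sigma>"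
    by (simp add: eval_nat_numeral algebra_simps)
  then have "3 * \<sigma>^3 \<le> (1 + \<sigma>^2)^2"
    using root \<open>2 < \<sigma>\<close> by (simp add: power2_eq_square algebra_simps eval_nat_numeral)
  moreover have C_r_r_max: "C_r * r_max = \<sigma>^3 / (1 + \<sigma>^2)^2"
    unfolding C_r_def \<sigma>_def[symmetric] \<open>\<sigma>^2 = r_max\<close>[symmetric]
    using \<open>2 < \<sigma>\<close> by (simp add: eval_nat_numeral)
  ultimately show ?thesis
    unfolding C_r_r_max by (simp add: divide_le_eq add_pos_nonneg mult.commute)
qed

lemma sum_lower_triangle_swap:
  fixes f :: "nat \<Rightarrow> nat \<Rightarrow> 'a::comm_monoid_add"
  shows "(\<Sum>j=m..k. \<Sum>i=m..j. f j i) = (\<Sum>i=m..k. \<Sum>j=i..k. f j i)"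
proof -
  have "(\<Sum>j=m..k. \<Sum>i=m..j. f j i) = (\<Sum>j=m..k. \<Sum>i\<in>{i. i \<in> {m..k} \<and> i \<le> j}. f j i)"
    by (intro sum.cong) auto
  also have "\<dots> = (\<Sum>i=m..k. \<Sum>j\<in>{j. j \<in> {m..k} \<and> i \<le> j}. f j i)"
    by (rule sum.swap_restrict) auto
  also have "\<dots> = (\<Sum>i=m..k. \<Sum>j=i..k. f j i)"
    by (intro sum.cong) auto
  finally show ?thesis .
qed

lemma lower_triangular_left_inverse_is_right_inverse:
  fixes \<theta> b :: "nat \<Rightarrow> nat \<Rightarrow> 'a::field"
  assumes left_inv: "\<And>n k. m \<le> k \<Longrightarrow> k \<le> n \<Longrightarrow> n \<le> N \<Longrightarrow>
      (\<Sum>j=k..n. \<theta> n j * b j k) = (if n = k then 1 else 0)"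
    and "m \<le> k" "k \<le> N"
  shows "(\<Sum>j=m..k. b k j * (\<Sum>i=m..j. \<theta> j i * x i)) = x k"
proof -
  define v where "v j = (\<Sum>i=m..j. \<theta> j i * x i)" for j
  define w where "w j = (\<Sum>i=m..j. b j i * v i)" for j
  have \<theta>_w: "(\<Sum>j=m..k. \<theta> k j * w j) = v k" if "m \<le> k" "k \<le> N" for k
  proof -
    have "(\<Sum>j=m..k. \<theta> k j * w j) = (\<Sum>j=m..k. \<Sum>i=m..j. \<theta> k j * b j i * v i)"
      by (simp add: w_def sum_distrib_left mult.assoc)
    also have "\<dots> = (\<Sum>i=m..k. (\<Sum>j=i..k. \<theta> k j * b j i) * v i)"
      by (simp add: sum_lower_triangle_swap sum_distrib_right)
    also have "\<dots> = (\<Sum>i=m..k. (if k = i then v i else 0))"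
      using left_inv that by (intro sum.cong) auto
    also have "\<dots> = v k"
      using that by simp
    finally show ?thesis .
  qed
  have "w k = x k" if "m \<le> k" "k \<le> N" for k
    using that
  proof (induction k rule: less_induct)
    case (less k)
    have "\<theta> k k * b k k = 1"
      using left_inv[of k k] less.prems by simp
    then have "\<theta> k k \<noteq> 0"
      by auto
    have last: "{m..k} = insert k {m..<k}"
      using less.prems by auto
    have "(\<Sum>j=m..<k. \<theta> k j * w j) = (\<Sum>j=m..<k. \<theta> k j * x j)"
      using less by (intro sum.cong) auto
    moreover have "(\<Sum>j=m..k. \<theta> k j * w j) = (\<Sum>j=m..k. \<theta> k j * x j)"
      using \<theta>_w less.prems by (simp add: v_def)
    ultimately have "\<theta> k k * w k = \<theta> k k * x k"
      by (simp add: last)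
    with \<open>\<theta> k k \<noteq> 0\<close> show ?case
      by simp
  qed
  then show ?thesis
    using assms by (simp add: w_def v_def)
qed

lemma is_DOC_right_inverse_bdf2:
  assumes "is_DOC t N theta" "2 \<le> k" "k \<le> N"
  shows "(\<Sum>j=2..k. bdf2 t k j * (\<Sum>i=2..j. theta j i * \<omega> i)) = \<omega> k"
  by (rule lower_triangular_left_inverse_is_right_inverse[where N = N])
    (use assms in \<open>auto simp: is_DOC_def\<close>)

lemma bdf2_sum_two_terms:
  assumes "3 \<le> k"
  shows "(\<Sum>j=2..k. bdf2 t k j * y j) = bdf2 t k k * y k + bdf2 t k (k - 1) * y (k - 1)"
proof -
  have "{2..k} = insert k (insert (k - 1) {2..<k - 1})"
    using assms by auto
  moreover have "(\<Sum>j=2..<k - 1. bdf2 t k j * y j) = 0"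
    by (intro sum.neutral) (auto simp: bdf2_def)
  ultimately show ?thesis
    using assms by (auto simp: sum.insert_if)
qed

definition bdf2_gain :: "real \<Rightarrow> real" where
  "bdf2_gain s = (2 + 4 * s^2 - s^3) / (1 + s^2)"

definition bdf2_loss :: "real \<Rightarrow> real" where
  "bdf2_loss s = s^3 / (1 + s^2)"

lemma bdf2_energy_step:
  assumes "2 \<le> k" "0 < tau t k" "0 < tau t (k - 1)"
  shows "bdf2_gain (sqrt (ratio t k)) * (v^2 / tau t k)
           - bdf2_loss (sqrt (ratio t k)) * (w^2 / tau t (k - 1))
         \<le> 2 * (bdf2 t k k * v + bdf2 t k (k - 1) * w) * v"
proof -
  define s where "s = sqrt (ratio t k)"
  define D where "D = tau t k * (1 + s^2)"
  have "0 < ratio t k"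
    using assms by (simp add: ratio_def)
  then have "0 < s" and ratio: "ratio t k = s^2"
    by (simp_all add: s_def)
  have "0 < D"
    using assms by (simp add: D_def add_pos_nonneg)
  have tau_prev: "tau t (k - 1) = tau t k / s^2"
    using assms ratio \<open>0 < s\<close> by (simp add: ratio_def field_simps)
  have gain: "bdf2_gain s * (v^2 / tau t k) = (2 + 4 * s^2 - s^3) * v^2 / D"
    by (simp add: bdf2_gain_def D_def mult_ac)
  have "bdf2_loss s * (w^2 / tau t (k - 1)) = s^3 * s^2 * w^2 / D"
    unfolding tau_prev using \<open>0 < s\<close> by (simp add: bdf2_loss_def D_def mult_ac)
  also have "\<dots> = s^5 * w^2 / D"
    by (simp flip: power_add)
  finally have lhs: "bdf2_gain s * (v^2 / tau t k) - bdf2_loss s * (w^2 / tau t (k - 1))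
      = ((2 + 4 * s^2 - s^3) * v^2 - s^5 * w^2) / D"
    using gain by (simp add: diff_divide_distrib)
  have b_diag: "bdf2 t k k = (1 + 2 * s^2) / D"
    using assms by (simp add: bdf2_def ratio D_def)
  have b_sub: "bdf2 t k (k - 1) = - (s^4) / D"
    using assms by (auto simp: bdf2_def ratio D_def simp flip: power_mult)
  have rhs: "2 * (bdf2 t k k * v + bdf2 t k (k - 1) * w) * v
      = 2 * ((1 + 2 * s^2) * v - s^4 * w) * v / D"
    unfolding b_diag b_sub using \<open>0 < D\<close> by (simp add: field_simps)
  have "2 * ((1 + 2 * s^2) * v - s^4 * w) * v - ((2 + 4 * s^2 - s^3) * v^2 - s^5 * w^2)
      = s^3 * (v - s * w)^2"
    by (simp add: algebra_simps eval_nat_numeral)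
  moreover have "0 \<le> s^3 * (v - s * w)^2"
    using \<open>0 < s\<close> by simp
  ultimately show ?thesis
    unfolding s_def[symmetric] lhs rhs using \<open>0 < D\<close> by (intro divide_right_mono) auto
qed

lemma bdf2_first_energy_step:
  assumes "0 < tau t 2" "0 < ratio t 2"
  shows "bdf2_gain 0 * (v^2 / tau t 2) \<le> 2 * (bdf2 t 2 2 * v) * v"
proof -
  have "1 / tau t 2 \<le> bdf2 t 2 2"
    using assms by (simp add: bdf2_def divide_simps)
  then have "1 / tau t 2 * v^2 \<le> bdf2 t 2 2 * v^2"
    by (rule mult_right_mono) simp
  then have "bdf2_gain 0 * (v^2 / tau t 2) \<le> 2 * (bdf2 t 2 2 * v^2)"
    by (simp add: bdf2_gain_def)
  then show ?thesis
    by (simp add: power2_eq_square mult_ac)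
qed

lemma bdf2_loss_nonneg: "0 \<le> s \<Longrightarrow> 0 \<le> bdf2_loss s"
  by (simp add: bdf2_loss_def)

lemma bdf2_loss_mono:
  assumes "0 \<le> S" "S \<le> m"
  shows "bdf2_loss S \<le> bdf2_loss m"
proof -
  have "S^3 \<le> m^3"
    using assms by (intro power_mono) auto
  moreover have "S^2 * (S * m^2) \<le> S^2 * (m * m^2)"
    using assms by (intro mult_left_mono mult_right_mono) auto
  ultimately have "S^3 * (1 + m^2) \<le> m^3 * (1 + S^2)"
    by (simp add: algebra_simps eval_nat_numeral)
  then show ?thesis
    by (simp add: bdf2_loss_def divide_simps add_pos_nonneg)
qed

lemma bdf2_gain_ge_2:
  assumes "0 \<le> s" "s \<le> 2"
  shows "2 \<le> bdf2_gain s"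
proof -
  have "s^2 * s \<le> s^2 * 2"
    using assms by (intro mult_left_mono) auto
  then have "2 * (1 + s^2) \<le> 2 + 4 * s^2 - s^3"
    by (simp add: eval_nat_numeral)
  then show ?thesis
    by (simp add: bdf2_gain_def divide_simps add_pos_nonneg)
qed

lemma bdf2_gain_le_2:
  assumes "2 \<le> m"
  shows "bdf2_gain m \<le> 2"
proof -
  have "m^2 * 2 \<le> m^2 * m"
    using assms by (intro mult_left_mono) auto
  then have "2 + 4 * m^2 - m^3 \<le> 2 * (1 + m^2)"
    by (simp add: eval_nat_numeral)
  then show ?thesis
    by (simp add: bdf2_gain_def divide_simps add_pos_nonneg)
qed

lemma bdf2_gain_antimono:
  assumes "0 \<le> s" "s \<le> m" "2 \<le> m"
  shows "bdf2_gain m \<le> bdf2_gain s"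
proof (cases "s \<le> 2")
  case True
  then show ?thesis
    using assms bdf2_gain_ge_2 bdf2_gain_le_2 by fastforce
next
  case False
  have "(2 + 4 * s^2 - s^3) * (1 + m^2) - (2 + 4 * m^2 - m^3) * (1 + s^2)
      = (m - s) * (m * (m - 2) + s * (s - 2) + m * s + s^2 * m^2)"
    by (simp add: algebra_simps eval_nat_numeral)
  also have "\<dots> \<ge> 0"
    using False assms by (intro mult_nonneg_nonneg add_nonneg_nonneg) auto
  finally show ?thesis
    by (simp add: bdf2_gain_def divide_simps add_pos_nonneg)
qed

lemma bdf2_gain_minus_loss_near_root:
  fixes \<sigma> m :: real
  assumes root: "\<sigma>^3 = 2 * \<sigma>^2 + 1" and "2 \<le> m" "m \<le> \<sigma>"
  shows "\<sigma> * (\<sigma>^2 - m^2) / (1 + \<sigma>^2)^2 \<le> bdf2_gain m - bdf2_loss m"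
proof -
  have "0 < 1 + m^2" "0 < 1 + \<sigma>^2"
    by (simp_all add: add_pos_nonneg)
  have "\<sigma> * m \<le> \<sigma>^2"
    using assms by (simp add: power2_eq_square mult_left_mono)
  moreover have "\<sigma> * (\<sigma> + m) = \<sigma>^2 + \<sigma> * m" "(1 + \<sigma>^2)^2 = 1 + 2 * \<sigma>^2 + (\<sigma>^2)^2"
    by (simp_all add: power2_eq_square algebra_simps)
  moreover have "0 \<le> (\<sigma>^2)^2"
    by simp
  ultimately have "\<sigma> * (\<sigma> + m) \<le> (1 + \<sigma>^2)^2"
    by linarith
  then have ratio_le_1: "\<sigma> * (\<sigma> + m) / (1 + \<sigma>^2)^2 \<le> 1"
    by (simp add: divide_le_eq_1)
  have "\<sigma> * (\<sigma>^2 - m^2) / (1 + \<sigma>^2)^2 = (\<sigma> - m) * (\<sigma> * (\<sigma> + m) / (1 + \<sigma>^2)^2)"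
    by (simp add: power2_eq_square algebra_simps)
  also have "\<dots> \<le> (\<sigma> - m) * 1"
    using assms ratio_le_1 by (intro mult_left_mono) auto
  also have "\<dots> \<le> (\<sigma> - m) * (2 * m^2 / (1 + m^2))"
    using assms \<open>0 < 1 + m^2\<close> mult_mono[of 2 m 2 m]
    by (intro mult_left_mono) (auto simp: power2_eq_square)
  also have "\<dots> = 2 * ((\<sigma> - m) * m^2) / (1 + m^2)"
    by simp
  also have "(\<sigma> - m) * m^2 \<le> 1 + 2 * m^2 - m^3"
  proof -
    have "1 + 2 * m^2 - m^3 = (\<sigma> - m) * (\<sigma> * (\<sigma> - 2) + m * (\<sigma> - 2) + m^2)"
      using root by (simp add: algebra_simps eval_nat_numeral)
    moreover have "(\<sigma> - m) * m^2 \<le> (\<sigma> - m) * (\<sigma> * (\<sigma> - 2) + m * (\<sigma> - 2) + m^2)"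
      using assms by (intro mult_left_mono) auto
    ultimately show ?thesis
      by simp
  qed
  then have "2 * ((\<sigma> - m) * m^2) / (1 + m^2) \<le> 2 * (1 + 2 * m^2 - m^3) / (1 + m^2)"
    using \<open>0 < 1 + m^2\<close> by (intro divide_right_mono) auto
  also have "\<dots> = bdf2_gain m - bdf2_loss m"
    by (simp add: bdf2_gain_def bdf2_loss_def diff_divide_distrib[symmetric] algebra_simps)
  finally show ?thesis .
qed

lemma bdf2_gain_minus_loss_ge:
  assumes "0 \<le> \<delta>" "\<delta> \<le> r_max"
    and "0 \<le> s" "s \<le> sqrt (r_max - \<delta>)" "0 \<le> S" "S \<le> sqrt (r_max - \<delta>)"
  shows "C_r * \<delta> \<le> bdf2_gain s - bdf2_loss S"
proof -
  define \<sigma> where "\<sigma> = sqrt r_max"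
  define m where "m = sqrt (r_max - \<delta>)"
  have "bdf2_loss S \<le> bdf2_loss m"
    using assms by (intro bdf2_loss_mono) (simp_all add: m_def)
  show ?thesis
  proof (cases "m \<le> 2")
    case True
    have "C_r * \<delta> \<le> C_r * r_max"
      using assms r_max_root by (intro mult_left_mono) (auto simp: C_r_def)
    moreover have "bdf2_loss m \<le> bdf2_loss 2"
      using True assms by (intro bdf2_loss_mono) (simp_all add: m_def)
    moreover have "2 \<le> bdf2_gain s"
      using True assms by (intro bdf2_gain_ge_2) (simp_all add: m_def)
    ultimately show ?thesis
      using C_r_times_r_max_le \<open>bdf2_loss S \<le> bdf2_loss m\<close>
      by (simp add: bdf2_loss_def)
  next
    case False
    have "m^2 = \<sigma>^2 - \<delta>" "m \<le> \<sigma>"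
      using assms by (simp_all add: m_def \<sigma>_def)
    then have "C_r * \<delta> = \<sigma> * (\<sigma>^2 - m^2) / (1 + \<sigma>^2)^2"
      using r_max_root by (simp add: C_r_def \<sigma>_def)
    also have "\<dots> \<le> bdf2_gain m - bdf2_loss m"
      using False \<open>m \<le> \<sigma>\<close> sqrt_r_max_cubic
      by (intro bdf2_gain_minus_loss_near_root) (simp_all add: \<sigma>_def)
    also have "\<dots> \<le> bdf2_gain s - bdf2_loss S"
      using False assms \<open>bdf2_loss S \<le> bdf2_loss m\<close> bdf2_gain_antimono[of s m]
      by (simp add: m_def)
    finally show ?thesis .
  qed
qed

lemma telescoped_energy_lower_bound:
  fixes E A L X :: "nat \<Rightarrow> real"
  assumes first: "A m * X m \<le> E m"
    and step: "\<And>k. m < k \<Longrightarrow> k \<le> n \<Longrightarrow> A k * X k - L k * X (k - 1) \<le> E k"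
    and coeff: "\<And>k. m \<le> k \<Longrightarrow> k < n \<Longrightarrow> \<epsilon> \<le> A k - L (Suc k)"
    and last: "\<epsilon> \<le> A n"
    and nonneg: "\<And>k. m \<le> k \<Longrightarrow> k \<le> n \<Longrightarrow> 0 \<le> X k"
    and "m \<le> n"
  shows "\<epsilon> * (\<Sum>k=m..n. X k) \<le> (\<Sum>k=m..n. E k)"
proof -
  have "\<epsilon> * (\<Sum>k=m..<j. X k) + A j * X j \<le> (\<Sum>k=m..j. E k)" if "m \<le> j" "j \<le> n" for j
    using that
  proof (induction j rule: nat_induct_at_least)
    case base
    then show ?case
      using first by simp
  next
    case (Suc j)
    have "\<epsilon> * X j \<le> (A j - L (Suc j)) * X j"
      using Suc coeff nonneg by (intro mult_right_mono) auto
    moreover have "A (Suc j) * X (Suc j) - L (Suc j) * X j \<le> E (Suc j)"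
      using Suc step[of "Suc j"] by simp
    ultimately show ?case
      using Suc by (simp add: algebra_simps)
  qed
  from this[of n] \<open>m \<le> n\<close>
  have "\<epsilon> * (\<Sum>k=m..<n. X k) + A n * X n \<le> (\<Sum>k=m..n. E k)"
    by simp
  moreover have "\<epsilon> * X n \<le> A n * X n"
    using last nonneg \<open>m \<le> n\<close> by (intro mult_right_mono) auto
  moreover have "(\<Sum>k=m..n. X k) = (\<Sum>k=m..<n. X k) + X n"
    using \<open>m \<le> n\<close> by (simp add: atLeastLessThanSuc_atLeastAtMost[symmetric])
  ultimately show ?thesis
    by (simp add: algebra_simps)
qed

theorem mainTheorem5:
  fixes t :: "nat \<Rightarrow> real" and N n :: nat and \<delta> :: real
    and theta :: "nat \<Rightarrow> nat \<Rightarrow> real" and \<omega> :: "nat \<Rightarrow> real"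
  assumes t0: "t 0 = 0"
    and incr: "\<forall>k\<in>{1..N}. t (k - 1) < t k"
    and delta: "0 < \<delta>" "\<delta> < r_max"
    and r2: "ratio t 2 > 0"
    and rk: "\<forall>k\<in>{3..N}. 0 < ratio t k \<and> ratio t k \<le> r_max - \<delta>"
    and doc: "is_DOC t N theta"
    and n: "2 \<le> n" "n \<le> N"
  shows "2 * (\<Sum>k=2..n. \<omega> k * (\<Sum>j=2..k. theta k j * \<omega> j))
         \<ge> C_r * \<delta> * (\<Sum>k=2..n. (1 / tau t k) * (\<Sum>j=2..k. theta k j * \<omega> j) ^ 2)"
proof -
  define v where "v k = (\<Sum>j=2..k. theta k j * \<omega> j)" for k
  define X where "X k = v k ^ 2 / tau t k" for k
  (* The first step is the case r = 0 of the BDF2 step, i.e. a BDF1 step. *)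
  define g where "g k = (if k = 2 then 0 else sqrt (ratio t k))" for k
  have tau_pos: "0 < tau t k" if "1 \<le> k" "k \<le> N" for k
    using incr that by (simp add: tau_def)
  have g_bound: "0 \<le> g k \<and> g k \<le> sqrt (r_max - \<delta>)" if "2 \<le> k" "k \<le> N" for k
  proof (cases "k = 2")
    case False
    with that rk have "0 < ratio t k \<and> ratio t k \<le> r_max - \<delta>"
      by auto
    with False show ?thesis
      by (simp add: g_def real_sqrt_le_mono)
  qed (use delta in \<open>simp add: g_def\<close>)
  have \<omega>_eq: "\<omega> k = (\<Sum>j=2..k. bdf2 t k j * v j)" if "2 \<le> k" "k \<le> N" for k
    using is_DOC_right_inverse_bdf2[OF doc that] by (simp add: v_def)
  have "C_r * \<delta> * (\<Sum>k=2..n. X k) \<le> (\<Sum>k=2..n. 2 * (\<omega> k * v k))"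
  proof (rule telescoped_energy_lower_bound[where A = "\<lambda>k. bdf2_gain (g k)" and L = "\<lambda>k. bdf2_loss (g k)"])
    show "bdf2_gain (g 2) * X 2 \<le> 2 * (\<omega> 2 * v 2)"
      using \<omega>_eq[of 2] bdf2_first_energy_step[of t "v 2"] tau_pos[of 2] r2 n
      by (simp add: g_def X_def mult_ac)
    show "bdf2_gain (g k) * X k - bdf2_loss (g k) * X (k - 1) \<le> 2 * (\<omega> k * v k)"
      if "2 < k" "k \<le> n" for k
      using \<omega>_eq[of k] bdf2_sum_two_terms[of k] bdf2_energy_step[of k t "v k" "v (k - 1)"]
        tau_pos[of k] tau_pos[of "k - 1"] that n
      by (simp add: g_def X_def algebra_simps)
    show "C_r * \<delta> \<le> bdf2_gain (g k) - bdf2_loss (g (Suc k))" if "2 \<le> k" "k < n" for k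
      using g_bound[of k] g_bound[of "Suc k"] that n delta
      by (intro bdf2_gain_minus_loss_ge) auto
    show "C_r * \<delta> \<le> bdf2_gain (g n)"
      using bdf2_gain_minus_loss_ge[of \<delta> "g n" "g n"] bdf2_loss_nonneg[of "g n"] g_bound[of n] n delta
      by auto
    show "0 \<le> X k" if "2 \<le> k" "k \<le> n" for k
      using tau_pos[of k] that n by (simp add: X_def)
  qed (use n in simp)
  then show ?thesis
    by (simp add: X_def v_def sum_distrib_left)
qed

end
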